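(* Let $\mathbf{F}=(f_{ij})$ be an $n\times n$ nonnegative matrix, $\vec z=(z_1,\dots,z_n)^{\mathrm T}$ a nonnegative column vector and $\vec y=(y_1,\dots,y_n)$ a nonnegative row vector. Define $T^{\mathrm{in}}_i=\sum_{j} f_{ij}+z_i$ and $T^{\mathrm{out}}_j=\sum_{i} f_{ij}+y_j$, assume all are positive, and assume steady state: $T^{\mathrm{in}}_\ell=T^{\mathrm{out}}_\ell$ for all $\ell$. Let $\mathbf G=(g_{ij})$ with $g_{ij}=f_{ij}/T^{\mathrm{out}}_j$ and $\mathbf G'=(g'_{ij})$ with $g'_{ij}=f_{ij}/T^{\mathrm{in}}_i$. Then for each integer $m\ge0$, $$\sum_{i=1}^n(\mathbf G^m\vec z)_i=\sum_{i=1}^n(\vec y\mathbf G'^m)_i.$$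
   Context: $f_{ij}$ is the flow from node $j$ to node $i$, $z_i$ the boundary input to node $i$, $y_j$ the boundary output from node $j$. $\mathbf G^0=\mathbf G'^0$ is the identity matrix. *)

theory Defs
  imports "HOL-Analysis.Analysis"
begin

primrec matpow :: "'a::semiring_1^'n^'n \<Rightarrow> nat \<Rightarrow> 'a^'n^'n" where
  "matpow A 0 = mat 1"
| "matpow A (Suc m) = A ** matpow A m"

end

theory Submission
  imports Defs
begin

text \<open>With \<open>T = diag(Tout) = diag(Tin)\<close> the two normalisations satisfy \<open>G T = F = T G'\<close>,
  hence \<open>G\<^sup>k T = T G'\<^sup>k\<close>, so the total of \<open>G\<^sup>k t\<close> equals the total of \<open>t G'\<^sup>k\<close> for the
  throughflow vector \<open>t = T 1\<close>. Steady state gives \<open>z = t - G t\<close> and \<open>y = t - t G'\<close>,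
  and the claim follows by subtracting the identity for \<open>k = m + 1\<close> from the one for \<open>k = m\<close>.\<close>

definition diag_mat :: "('n \<Rightarrow> 'a::zero) \<Rightarrow> 'a^'n^'n" where
  "diag_mat d = (\<chi> i j. if i = j then d i else 0)"

lemma diag_mat_mult_one:
  fixes d :: "'n::finite \<Rightarrow> 'a::semiring_1"
  shows "diag_mat d *v 1 = (\<chi> i. d i)"
  by (simp add: vec_eq_iff diag_mat_def matrix_vector_mult_def if_distrib if_distribR cong: if_cong)

lemma one_mult_diag_mat:
  fixes d :: "'n::finite \<Rightarrow> 'a::semiring_1"
  shows "1 v* diag_mat d = (\<chi> i. d i)"
  by (simp add: vec_eq_iff diag_mat_def vector_matrix_mult_def if_distrib if_distribR cong: if_cong)

lemma column_scaled_mult_diag_mat: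
  fixes F :: "'a::field^'n^'n"
  assumes "\<And>j. d j \<noteq> 0"
  shows "(\<chi> i j. F $ i $ j / d j) ** diag_mat d = F"
  using assms
  by (simp add: vec_eq_iff diag_mat_def matrix_matrix_mult_def if_distrib if_distribR cong: if_cong)

lemma diag_mat_mult_row_scaled:
  fixes F :: "'a::field^'n^'n"
  assumes "\<And>i. d i \<noteq> 0"
  shows "diag_mat d ** (\<chi> i j. F $ i $ j / d i) = F"
  using assms
  by (simp add: vec_eq_iff diag_mat_def matrix_matrix_mult_def if_distrib if_distribR cong: if_cong)

lemma matpow_Suc_right: "matpow A (Suc m) = matpow A m ** A"
  by (induction m) (simp_all add: matrix_mul_assoc)

lemma matpow_intertwine:
  assumes "A ** B = B ** C"
  shows "matpow A k ** B = B ** matpow C k"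
proof (induction k)
  case (Suc k)
  have "matpow A (Suc k) ** B = A ** (B ** matpow C k)"
    by (simp add: matrix_mul_assoc flip: Suc)
  also have "\<dots> = B ** matpow C (Suc k)"
    by (simp add: assms matrix_mul_assoc flip: matrix_mul_assoc[of A B] matpow_Suc_right)
  finally show ?case .
qed simp

lemma sum_matrix_vector_mult:
  fixes A :: "'a::comm_semiring_1^'n^'n"
  shows "(\<Sum>i\<in>UNIV. (A *v x) $ i) = (\<Sum>j\<in>UNIV. (1 v* A) $ j * x $ j)"
  unfolding matrix_vector_mult_def vector_matrix_mult_def
  by (simp add: sum_distrib_right) (rule sum.swap)

lemma sum_matpow_diag_mat_intertwine:
  fixes A B :: "'a::comm_semiring_1^'n^'n"
  assumes "A ** diag_mat d = diag_mat d ** B"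
  shows "(\<Sum>i\<in>UNIV. (matpow A k *v (\<chi> i. d i)) $ i) = (\<Sum>i\<in>UNIV. ((\<chi> i. d i) v* matpow B k) $ i)"
proof -
  have "matpow A k *v (\<chi> i. d i) = (diag_mat d ** matpow B k) *v 1"
    by (simp add: matrix_vector_mul_assoc matpow_intertwine[OF assms] flip: diag_mat_mult_one)
  moreover have "1 v* (diag_mat d ** matpow B k) = (\<chi> i. d i) v* matpow B k"
    by (simp add: vector_matrix_mul_assoc flip: one_mult_diag_mat)
  ultimately show ?thesis
    by (simp add: sum_matrix_vector_mult)
qed

theorem lemma2:
  fixes F :: "real^'n^'n" and z :: "real^'n" and y :: "real^'n"
    and Tin Tout :: "'n \<Rightarrow> real" and G G' :: "real^'n^'n" and m :: nat
  assumes F_nonneg: "\<And>i j. F $ i $ j \<ge> 0"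
    and z_nonneg: "\<And>i. z $ i \<ge> 0"
    and y_nonneg: "\<And>j. y $ j \<ge> 0"
    and Tin_def: "\<And>i. Tin i = (\<Sum>j\<in>UNIV. F $ i $ j) + z $ i"
    and Tout_def: "\<And>j. Tout j = (\<Sum>i\<in>UNIV. F $ i $ j) + y $ j"
    and Tin_pos: "\<And>i. Tin i > 0"
    and Tout_pos: "\<And>j. Tout j > 0"
    and steady: "\<And>l. Tin l = Tout l"
    and G_def: "G = (\<chi> i j. F $ i $ j / Tout j)"
    and G'_def: "G' = (\<chi> i j. F $ i $ j / Tin i)"
  shows "(\<Sum>i\<in>UNIV. (matpow G m *v z) $ i) = (\<Sum>i\<in>UNIV. (y v* matpow G' m) $ i)"
proof -
  define t where "t = (\<chi> i. Tout i)"
  have Tout_nz: "\<And>j. Tout j \<noteq> 0" and Tin_eq: "Tin = Tout"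
    using Tout_pos steady by (auto simp: order.strict_iff_order)
  have G_diag: "G ** diag_mat Tout = F" and diag_G': "diag_mat Tout ** G' = F"
    unfolding G_def G'_def Tin_eq using Tout_nz
    by (simp_all add: column_scaled_mult_diag_mat diag_mat_mult_row_scaled)
  have "G *v t = F *v 1"
    by (simp add: t_def matrix_vector_mul_assoc G_diag flip: diag_mat_mult_one)
  then have z_eq: "z = t - G *v t"
    by (simp add: vec_eq_iff t_def matrix_vector_mult_def Tin_def flip: Tin_eq)
  have "t v* G' = 1 v* F"
    by (simp add: t_def vector_matrix_mul_assoc diag_G' flip: one_mult_diag_mat)
  then have y_eq: "y = t - t v* G'"
    by (simp add: vec_eq_iff t_def vector_matrix_mult_def Tout_def)
  have totals: "(\<Sum>i\<in>UNIV. (matpow G k *v t) $ i) = (\<Sum>i\<in>UNIV. (t v* matpow G' k) $ i)" for k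
    unfolding t_def by (rule sum_matpow_diag_mat_intertwine) (simp add: G_diag diag_G')
  have "matpow G m *v z = matpow G m *v t - matpow G (Suc m) *v t"
    by (simp add: z_eq matrix_vector_mult_diff_distrib matrix_vector_mul_assoc matpow_Suc_right
        del: matpow.simps(2))
  moreover have "y v* matpow G' m = t v* matpow G' m - t v* matpow G' (Suc m)"
    by (simp add: y_eq vector_matrix_mult_diff_distrib vector_matrix_mul_assoc)
  ultimately show ?thesis
    by (simp add: sum_subtractf totals del: matpow.simps(2))
qed

end
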